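(* Let $n,m\ge1$, $r>0$, and let $\mathbf b_1,\dots,\mathbf b_m\in[0,\infty)^n$ be nonzero vectors with nonnegative entries. Put $D_{ij}=\frac{r}{m}(\mathbf b_i\cdot\mathbf b_j)$ for $i,j=1,\dots,m$ and $\overline D=\max_{i,j}D_{ij}$. Define a sequence $\alpha^{(t)}=(\alpha^{(t)}_1,\dots,\alpha^{(t)}_m)$, $t=0,1,2,\dots$, by $\alpha^{(0)}_k=\sqrt{1/(\overline D m)}$ for all $k$, and, given $\alpha^{(t)}$: compute $E_i^{(t)}=\sum_{j=1}^m D_{ij}\alpha^{(t)}_i\alpha^{(t)}_j-1$ for $i=1,\dots,m$; choose an index $k=k_t$ with $|E^{(t)}_k|=\max_i|E^{(t)}_i|$; set $\alpha^{(t+1)}_i=\alpha^{(t)}_i$ for $i\ne k$ and $$\alpha^{(t+1)}_k=\frac{-s+\sqrt{s^2+4D_{kk}}}{2D_{kk}},\qquad s=\sum_{i\ne k}D_{ik}\alpha^{(t)}_i.$$ Then the set $\{\alpha^{(t)}_k: k=1,\dots,m,\ t\ge0\}$ is bounded above, and there is a number $B>0$ such that $\alpha^{(t)}_k>B$ for all $k$ and all $t$.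
   Context: Note $D$ is symmetric with nonnegative entries and $D_{kk}>0$. The update of $\alpha_k$ is the unique positive root of the quadratic $D_{kk}\alpha_k^2+s\alpha_k-1=0$, i.e. it makes the $k$-th equation of the system $\sum_j D_{kj}\alpha_k\alpha_j=1$ hold exactly. *)

theory Defs
  imports Complex_Main
begin

text \<open>Gram-type matrix D_ij = (r/m) (b_i . b_j), vectors indexed 0..<m, coordinates 0..<n.\<close>
definition Dmat :: "nat \<Rightarrow> nat \<Rightarrow> real \<Rightarrow> (nat \<Rightarrow> nat \<Rightarrow> real) \<Rightarrow> nat \<Rightarrow> nat \<Rightarrow> real" where
  "Dmat n m r b i j = r / real m * (\<Sum>l<n. b i l * b j l)"

end

theory Submission
  imports Defs
begin

text \<open>Each update solves \<open>D\<^sub>k\<^sub>k x\<^sup>2 + s x = 1\<close> with \<open>s \<ge> 0\<close> built from the other coordinates, so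
  its positive root \<open>x = 2 / (s + sqrt (s\<^sup>2 + 4 D\<^sub>k\<^sub>k))\<close> is at most \<open>1 / sqrt D\<^sub>k\<^sub>k\<close>; together with
  the initial values this bounds every coordinate from above. That bound in turn bounds \<open>s\<close>,
  and since the root is antitone in \<open>s\<close> and \<open>D\<^sub>k\<^sub>k\<close>, every updated value is at least the root
  for the largest possible \<open>s\<close> and diagonal entry. The choice of the updated index plays no
  role.\<close>

definition pos_root :: "real \<Rightarrow> real \<Rightarrow> real" where
  "pos_root s d = (- s + sqrt (s\<^sup>2 + 4 * d)) / (2 * d)"

lemma abs_less_sqrt_square_add:
  fixes s d :: real
  assumes "d > 0"
  shows "\<bar>s\<bar> < sqrt (s\<^sup>2 + 4 * d)"
proof -
  have "sqrt (s\<^sup>2) < sqrt (s\<^sup>2 + 4 * d)" using assms by (subst real_sqrt_less_iff) simp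
  then show ?thesis by simp
qed

lemma pos_root_eq:
  assumes "d > 0"
  shows "pos_root s d = 2 / (s + sqrt (s\<^sup>2 + 4 * d))"
proof -
  have denom_pos: "s + sqrt (s\<^sup>2 + 4 * d) > 0"
    using abs_less_sqrt_square_add[OF assms, of s] by linarith
  have "(sqrt (s\<^sup>2 + 4 * d))\<^sup>2 = s\<^sup>2 + 4 * d" using assms by simp
  then have "(- s + sqrt (s\<^sup>2 + 4 * d)) * (s + sqrt (s\<^sup>2 + 4 * d)) = 4 * d"
    by (simp add: algebra_simps power2_eq_square)
  then show ?thesis using denom_pos assms by (simp add: pos_root_def field_simps)
qed

lemma pos_root_pos:
  assumes "d > 0"
  shows "pos_root s d > 0"
  using abs_less_sqrt_square_add[OF assms, of s] by (simp add: pos_root_eq[OF assms])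

lemma pos_root_le_inverse_sqrt:
  assumes "d > 0" and "s \<ge> 0"
  shows "pos_root s d \<le> 1 / sqrt d"
proof -
  have "2 * sqrt d = sqrt (4 * d)" by (simp add: real_sqrt_mult)
  also have "\<dots> \<le> sqrt (s\<^sup>2 + 4 * d)" by simp
  finally have "2 * sqrt d \<le> s + sqrt (s\<^sup>2 + 4 * d)" using assms(2) by linarith
  then have "2 / (s + sqrt (s\<^sup>2 + 4 * d)) \<le> 2 / (2 * sqrt d)"
    using assms(1) by (intro frac_le) auto
  then show ?thesis by (simp add: pos_root_eq[OF assms(1)])
qed

lemma pos_root_antimono:
  assumes "d > 0" and "s \<ge> 0" and "s \<le> s'" and "d \<le> d'"
  shows "pos_root s' d' \<le> pos_root s d"
proof -
  have "s\<^sup>2 \<le> s'\<^sup>2" using assms by (simp add: power_mono)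
  then have "sqrt (s\<^sup>2 + 4 * d) \<le> sqrt (s'\<^sup>2 + 4 * d')" using assms(4) by simp
  then have "s + sqrt (s\<^sup>2 + 4 * d) \<le> s' + sqrt (s'\<^sup>2 + 4 * d')" using assms(3) by linarith
  moreover have "0 < s + sqrt (s\<^sup>2 + 4 * d)"
    using abs_less_sqrt_square_add[OF assms(1), of s] by linarith
  ultimately have "2 / (s' + sqrt (s'\<^sup>2 + 4 * d')) \<le> 2 / (s + sqrt (s\<^sup>2 + 4 * d))"
    by (intro frac_le) auto
  then show ?thesis using assms by (simp add: pos_root_eq)
qed

locale coordinatewise_root_iteration =
  fixes m :: nat and D :: "nat \<Rightarrow> nat \<Rightarrow> real"
    and alpha :: "nat \<Rightarrow> nat \<Rightarrow> real" and ks :: "nat \<Rightarrow> nat"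
  assumes D_nonneg: "i < m \<Longrightarrow> j < m \<Longrightarrow> 0 \<le> D i j"
    and D_diag_pos: "k < m \<Longrightarrow> 0 < D k k"
    and alpha_0_pos: "k < m \<Longrightarrow> 0 < alpha 0 k"
    and ks_less: "ks t < m"
    and step_other: "i < m \<Longrightarrow> i \<noteq> ks t \<Longrightarrow> alpha (Suc t) i = alpha t i"
    and step_ks: "alpha (Suc t) (ks t) =
      pos_root (\<Sum>i\<in>{..<m} - {ks t}. D i (ks t) * alpha t i) (D (ks t) (ks t))"
begin

definition off_diag_sum :: "nat \<Rightarrow> real" where
  "off_diag_sum t = (\<Sum>i\<in>{..<m} - {ks t}. D i (ks t) * alpha t i)"

lemma alpha_pos_le:
  assumes "k < m"
  shows "0 < alpha t k \<and> alpha t k \<le> max (alpha 0 k) (1 / sqrt (D k k))"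
  using assms
proof (induction t arbitrary: k)
  case 0
  then show ?case using alpha_0_pos by simp
next
  case (Suc t)
  show ?case
  proof (cases "k = ks t")
    case True
    have "0 \<le> off_diag_sum t"
      unfolding off_diag_sum_def using Suc.IH D_nonneg ks_less
      by (intro sum_nonneg mult_nonneg_nonneg) (auto intro: less_imp_le)
    then show ?thesis
      using True step_ks[of t] pos_root_pos pos_root_le_inverse_sqrt D_diag_pos[OF Suc.prems]
      by (fastforce simp: off_diag_sum_def)
  next
    case False
    then show ?thesis using Suc step_other by simp
  qed
qed

definition alpha_sup :: real where
  "alpha_sup = (\<Sum>k<m. max (alpha 0 k) (1 / sqrt (D k k)))"

lemma alpha_le_sup:
  assumes "k < m"
  shows "alpha t k \<le> alpha_sup"
proof -
  have "max (alpha 0 k) (1 / sqrt (D k k)) \<le> alpha_sup"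
    unfolding alpha_sup_def using assms alpha_0_pos
    by (intro member_le_sum) (auto intro: max.coboundedI1 less_imp_le)
  then show ?thesis using alpha_pos_le[OF assms, of t] by linarith
qed

lemma alpha_sup_nonneg: "m > 0 \<Longrightarrow> 0 \<le> alpha_sup"
  using alpha_pos_le[of 0 0] alpha_le_sup[of 0 0] by linarith

lemma off_diag_sum_le: "off_diag_sum t \<le> (\<Sum>i<m. \<Sum>j<m. D i j) * alpha_sup"
proof -
  have m_pos: "m > 0" using ks_less[of t] by simp
  have "off_diag_sum t \<le> (\<Sum>i\<in>{..<m} - {ks t}. D i (ks t) * alpha_sup)"
    unfolding off_diag_sum_def using alpha_le_sup D_nonneg ks_less
    by (intro sum_mono mult_left_mono) auto
  also have "\<dots> \<le> (\<Sum>i<m. D i (ks t) * alpha_sup)"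
    using D_nonneg ks_less alpha_sup_nonneg[OF m_pos] by (intro sum_mono2) auto
  also have "\<dots> = (\<Sum>i<m. D i (ks t)) * alpha_sup" by (simp add: sum_distrib_right)
  also have "\<dots> \<le> (\<Sum>i<m. \<Sum>j<m. D i j) * alpha_sup"
    using D_nonneg ks_less alpha_sup_nonneg[OF m_pos]
    by (intro mult_right_mono sum_mono member_le_sum) auto
  finally show ?thesis .
qed

definition alpha_inf :: real where
  "alpha_inf = pos_root ((\<Sum>i<m. \<Sum>j<m. D i j) * alpha_sup) (\<Sum>k<m. D k k)"

lemma alpha_ge_min:
  assumes "k < m"
  shows "min (alpha 0 k) alpha_inf \<le> alpha t k"
  using assms
proof (induction t arbitrary: k)
  case 0
  then show ?case by simp
next
  case (Suc t)
  show ?case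
  proof (cases "k = ks t")
    case True
    have "0 \<le> off_diag_sum t"
      unfolding off_diag_sum_def using alpha_pos_le D_nonneg ks_less
      by (intro sum_nonneg mult_nonneg_nonneg) (auto intro: less_imp_le)
    moreover have "D k k \<le> (\<Sum>k<m. D k k)"
      using Suc.prems D_nonneg by (intro member_le_sum) auto
    ultimately have "alpha_inf \<le> pos_root (off_diag_sum t) (D k k)"
      unfolding alpha_inf_def using True off_diag_sum_le[of t] D_diag_pos[OF Suc.prems]
      by (intro pos_root_antimono)
    then show ?thesis using True step_ks[of t] by (simp add: off_diag_sum_def)
  next
    case False
    then show ?thesis using Suc step_other by simp
  qed
qed

lemma alpha_inf_pos: "m > 0 \<Longrightarrow> 0 < alpha_inf"
proof -
  assume "m > 0"
  then have "0 < D 0 0" using D_diag_pos by simp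
  also have "\<dots> \<le> (\<Sum>k<m. D k k)"
    using \<open>m > 0\<close> D_nonneg by (intro member_le_sum) auto
  finally show ?thesis unfolding alpha_inf_def by (rule pos_root_pos)
qed

end

lemma Dmat_nonneg:
  assumes "r > 0" and "\<forall>i<m. \<forall>l<n. b i l \<ge> 0" and "i < m" and "j < m"
  shows "0 \<le> Dmat n m r b i j"
  unfolding Dmat_def using assms by (intro mult_nonneg_nonneg divide_nonneg_nonneg sum_nonneg) auto

lemma Dmat_diag_pos:
  assumes "r > 0" and "m > 0" and "l < n" and "b k l \<noteq> 0"
  shows "0 < Dmat n m r b k k"
proof -
  have "0 < b k l * b k l" using assms(4) by (cases "b k l > 0") (auto simp: mult_neg_neg)
  also have "\<dots> \<le> (\<Sum>l<n. b k l * b k l)" using assms(3) by (intro member_le_sum) auto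
  finally show ?thesis unfolding Dmat_def using assms(1,2) by simp
qed

theorem lemma2:
  fixes n m :: nat and r :: real and b :: "nat \<Rightarrow> nat \<Rightarrow> real"
    and alpha :: "nat \<Rightarrow> nat \<Rightarrow> real" and ks :: "nat \<Rightarrow> nat"
  assumes "n \<ge> 1" and "m \<ge> 1" and "r > 0"
    and b_nonneg: "\<forall>i<m. \<forall>l<n. b i l \<ge> 0"
    and b_nonzero: "\<forall>i<m. \<exists>l<n. b i l \<noteq> 0"
    and alpha0: "\<forall>k<m. alpha 0 k =
        sqrt (1 / (Max {Dmat n m r b i j | i j. i < m \<and> j < m} * real m))"
    and ks_max: "\<forall>t. ks t < m \<and> (\<forall>i<m.
        \<bar>(\<Sum>j<m. Dmat n m r b i j * alpha t i * alpha t j) - 1\<bar>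
          \<le> \<bar>(\<Sum>j<m. Dmat n m r b (ks t) j * alpha t (ks t) * alpha t j) - 1\<bar>)"
    and step_other: "\<forall>t. \<forall>i<m. i \<noteq> ks t \<longrightarrow> alpha (Suc t) i = alpha t i"
    and step_k: "\<forall>t. alpha (Suc t) (ks t) =
        (let k = ks t; s = (\<Sum>i\<in>{..<m} - {k}. Dmat n m r b i k * alpha t i)
         in (- s + sqrt (s\<^sup>2 + 4 * Dmat n m r b k k)) / (2 * Dmat n m r b k k))"
  shows "(\<exists>U. \<forall>t. \<forall>k<m. alpha t k \<le> U) \<and> (\<exists>B>0. \<forall>t. \<forall>k<m. alpha t k > B)"
proof -
  have diag_pos: "k < m \<Longrightarrow> 0 < Dmat n m r b k k" for k
    using b_nonzero \<open>m \<ge> 1\<close> Dmat_diag_pos[OF \<open>r > 0\<close>, of m] by fastforce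
  have "Dmat n m r b 0 0 \<le> Max {Dmat n m r b i j | i j. i < m \<and> j < m}"
    using \<open>m \<ge> 1\<close> by (intro Max_ge finite_image_set2) force+
  then have a0_pos: "0 < sqrt (1 / (Max {Dmat n m r b i j | i j. i < m \<and> j < m} * real m))"
    using diag_pos[of 0] \<open>m \<ge> 1\<close> by simp
  interpret coordinatewise_root_iteration m "Dmat n m r b" alpha ks
    using Dmat_nonneg[OF \<open>r > 0\<close> b_nonneg] diag_pos alpha0 a0_pos ks_max step_other step_k
    by unfold_locales (auto simp: pos_root_def Let_def)
  define B where "B = min (alpha 0 0) alpha_inf / 2"
  have "0 < B" using alpha_0_pos[of 0] alpha_inf_pos \<open>m \<ge> 1\<close> by (simp add: B_def)
  moreover have "B < alpha t k" if "k < m" for t k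
  proof -
    have "alpha 0 k = alpha 0 0" using alpha0 that \<open>m \<ge> 1\<close> by simp
    then have "B < min (alpha 0 k) alpha_inf" using \<open>0 < B\<close> by (simp add: B_def min_def)
    then show ?thesis using alpha_ge_min[OF that, of t] by linarith
  qed
  ultimately show ?thesis using alpha_le_sup by blast
qed

end
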